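(* Let $G=(V,E)$ be an undirected graph with $n=|V|$, fix an orientation of its edges, and let $P\subseteq\mathbb{R}^E$ be the matching polytope of $G$. Then $P=\operatorname{conv}\{x\in\mathbb{R}^E_{\geq0}: x(\delta(v))\leq1\text{ and }x(\delta^+(v))\in\mathbb{Z}\text{ for every }v\in V\}$. In particular, $P$ admits a MILEF of size $O(n^2)$ with $n$ integer variables.
   Context: For $v\in V$, $\delta(v)$ is the set of edges incident to $v$, and $\delta^+(v)$ (resp. $\delta^-(v)$) the set of edges entering (resp. leaving) $v$ under the fixed orientation. For $F\subseteq E$, $x(F)=\sum_{e\in F}x_e$. The matching polytope is the convex hull of characteristic vectors of matchings (edge sets in which every vertex has degree at most one). A MILEF of a convex set $P\subseteq\mathbb{R}^d$ is a triple $(Q,\sigma,\pi)$ with $Q\subseteq\mathbb{R}^\ell$ a polyhedron, $\sigma:\mathbb{R}^\ell\to\mathbb{R}^k$, $\pi:\mathbb{R}^\ell\to\mathbb{R}^d$ affine, and $P=\operatorname{conv}(\pi(Q\cap\sigma^{-1}(\mathbb{Z}^k)))$; its size is the number of facets of $Q$ and $k$ is its number of integer variables. *)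

theory Defs
  imports "HOL-Analysis.Analysis" "HOL-Library.Function_Algebras"
begin

(* Pointwise real vector space structure on functions, so that R^E and R^l can be
   modelled as functions (with support in E, resp. {..<l}) and the library's
   convex hull / face_of apply. *)
instantiation "fun" :: (type, real_vector) real_vector
begin
definition scaleR_fun :: "real \<Rightarrow> ('a \<Rightarrow> 'b) \<Rightarrow> 'a \<Rightarrow> 'b"
  where "scaleR_fun c f = (\<lambda>x. c *\<^sub>R f x)"
instance
  by standard (simp_all add: scaleR_fun_def fun_eq_iff scaleR_add_right scaleR_add_left)
end

(* A finite undirected simple graph on vertex set V together with a fixed orientation:
   each undirected edge {u,v} is stored exactly once, as the ordered pair (tail, head). *)
definition oriented_simple_graph :: "'a set \<Rightarrow> ('a \<times> 'a) set \<Rightarrow> bool" where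
  "oriented_simple_graph V E \<longleftrightarrow> finite V \<and> E \<subseteq> V \<times> V \<and>
     (\<forall>u v. (u, v) \<in> E \<longrightarrow> u \<noteq> v \<and> (v, u) \<notin> E)"

definition delta :: "('a \<times> 'a) set \<Rightarrow> 'a \<Rightarrow> ('a \<times> 'a) set" where
  "delta E v = {e \<in> E. fst e = v \<or> snd e = v}"

(* delta^+(v): edges entering v *)
definition delta_in :: "('a \<times> 'a) set \<Rightarrow> 'a \<Rightarrow> ('a \<times> 'a) set" where
  "delta_in E v = {e \<in> E. snd e = v}"

definition delta_out :: "('a \<times> 'a) set \<Rightarrow> 'a \<Rightarrow> ('a \<times> 'a) set" where
  "delta_out E v = {e \<in> E. fst e = v}"

definition is_matching :: "('a \<times> 'a) set \<Rightarrow> ('a \<times> 'a) set \<Rightarrow> bool" where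
  "is_matching E M \<longleftrightarrow> M \<subseteq> E \<and> (\<forall>v. card (delta M v) \<le> 1)"

definition matching_polytope :: "('a \<times> 'a) set \<Rightarrow> (('a \<times> 'a) \<Rightarrow> real) set" where
  "matching_polytope E = convex hull {indicator M | M. is_matching E M}"

definition matching_relaxation_int ::
  "'a set \<Rightarrow> ('a \<times> 'a) set \<Rightarrow> (('a \<times> 'a) \<Rightarrow> real) set" where
  "matching_relaxation_int V E =
     {x. (\<forall>e. e \<notin> E \<longrightarrow> x e = 0) \<and> (\<forall>e\<in>E. 0 \<le> x e) \<and>
         (\<forall>v\<in>V. sum x (delta E v) \<le> 1 \<and> sum x (delta_in E v) \<in> \<int>)}"

definition Rsp :: "nat \<Rightarrow> (nat \<Rightarrow> real) set" where
  "Rsp l = {y. \<forall>j\<ge>l. y j = 0}"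

definition polyhedron_in :: "nat \<Rightarrow> (nat \<Rightarrow> real) set \<Rightarrow> bool" where
  "polyhedron_in l Q \<longleftrightarrow>
     (\<exists>(m::nat) (A::nat\<Rightarrow>nat\<Rightarrow>real) (b::nat\<Rightarrow>real). Q = {y \<in> Rsp l. \<forall>i<m. (\<Sum>j<l. A i j * y j) \<le> b i})"

definition is_facet :: "(nat \<Rightarrow> real) set \<Rightarrow> (nat \<Rightarrow> real) set \<Rightarrow> bool" where
  "is_facet F Q \<longleftrightarrow> F face_of Q \<and> F \<noteq> {} \<and> F \<noteq> Q \<and>
     (\<forall>G. G face_of Q \<and> F \<subseteq> G \<and> G \<noteq> Q \<longrightarrow> G = F)"

definition num_facets :: "(nat \<Rightarrow> real) set \<Rightarrow> nat" where
  "num_facets Q = card {F. is_facet F Q}"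

definition affine_to_Rk :: "nat \<Rightarrow> nat \<Rightarrow> ((nat \<Rightarrow> real) \<Rightarrow> (nat \<Rightarrow> real)) \<Rightarrow> bool" where
  "affine_to_Rk l k \<sigma> \<longleftrightarrow> (\<exists>S s0. \<forall>y\<in>Rsp l.
     \<sigma> y = (\<lambda>i. if i < k then (\<Sum>j<l. S i j * y j) + s0 i else 0))"

definition affine_to_RE :: "nat \<Rightarrow> ('b set) \<Rightarrow> ((nat \<Rightarrow> real) \<Rightarrow> ('b \<Rightarrow> real)) \<Rightarrow> bool" where
  "affine_to_RE l E \<pi> \<longleftrightarrow> (\<exists>Pm p0. \<forall>y\<in>Rsp l.
     \<pi> y = (\<lambda>e. if e \<in> E then (\<Sum>j<l. Pm e j * y j) + p0 e else 0))"

definition is_MILEF ::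
  "'b set \<Rightarrow> ('b \<Rightarrow> real) set \<Rightarrow> nat \<Rightarrow> (nat \<Rightarrow> real) set \<Rightarrow> nat \<Rightarrow>
   ((nat \<Rightarrow> real) \<Rightarrow> (nat \<Rightarrow> real)) \<Rightarrow> ((nat \<Rightarrow> real) \<Rightarrow> ('b \<Rightarrow> real)) \<Rightarrow> bool" where
  "is_MILEF E P l Q k \<sigma> \<pi> \<longleftrightarrow> polyhedron_in l Q \<and> affine_to_Rk l k \<sigma> \<and> affine_to_RE l E \<pi> \<and>
     P = convex hull (\<pi> ` {y \<in> Q. \<forall>i<k. \<sigma> y i \<in> \<int>})"

end

(*
  A point x of the relaxation has integral in-degrees in [0, 1]. If x e > 0 then the head of e
  has in-degree 1 and, since e also counts at its tail, the tail has in-degree < 1, i.e. 0. So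
  the support of x is a bipartite graph between the vertices of in-degree 0 and those of
  in-degree 1, on which x is a fractional matching; fractional matchings of bipartite graphs lie
  in the matching polytope (a vertex argument: away from integral points one can move in both
  directions without leaving the degree constraints). Conversely matchings are points of the
  relaxation.

  Enumerating the edges, the relaxation is the projection of the mixed-integer set given by
  card E nonnegativity and card V degree inequalities, with the card V in-degrees as integer
  variables; a polyhedron described by m inequalities has at most m facets.
*)

theory Submission
  imports Defs
begin

section \<open>Facets of polyhedra\<close>

lemma face_of_tight_linear_le:
  fixes h :: "'a::real_vector \<Rightarrow> real"
  assumes "convex S" and "linear h" and le: "\<And>x. x \<in> S \<Longrightarrow> h x \<le> c"
  shows "{x \<in> S. h x = c} face_of S"
  unfolding face_of_def
proof (intro conjI ballI impI)
  show "convex {x \<in> S. h x = c}"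
    using \<open>convex S\<close> \<open>linear h\<close> by (auto simp: convex_def linear_add linear_scale simp flip: distrib_right)
next
  fix a b x assume ab: "a \<in> S" "b \<in> S" and x: "x \<in> {x \<in> S. h x = c}" "x \<in> open_segment a b"
  obtain u where u: "0 < u" "u < 1" "x = (1 - u) *\<^sub>R a + u *\<^sub>R b"
    using x(2) in_segment(2) by blast
  have "h x = (1 - u) * h a + u * h b"
    using u(3) \<open>linear h\<close> by (simp add: linear_add linear_scale)
  then have "(1 - u) * (c - h a) + u * (c - h b) = 0"
    using x(1) by (simp add: algebra_simps)
  moreover have "0 \<le> (1 - u) * (c - h a)" "0 \<le> u * (c - h b)"
    using le ab u by simp_all
  ultimately have "(1 - u) * (c - h a) = 0" "u * (c - h b) = 0" by linarith+
  then have "h a = c \<and> h b = c" using u by simp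
  then show "a \<in> {x \<in> S. h x = c}" "b \<in> {x \<in> S. h x = c}" using ab by simp_all
qed auto

lemma convex_strictly_feasible_point:
  fixes f :: "'i \<Rightarrow> 'a::real_vector \<Rightarrow> real"
  assumes "convex F" and "F \<noteq> {}" and "finite I"
    and le: "\<And>i y. i \<in> I \<Longrightarrow> y \<in> F \<Longrightarrow> f i y \<le> b i"
    and strict: "\<And>i. i \<in> I \<Longrightarrow> \<exists>y\<in>F. f i y < b i"
    and lin: "\<And>i. i \<in> I \<Longrightarrow> linear (f i)"
  shows "\<exists>z\<in>F. \<forall>i\<in>I. f i z < b i"
  using \<open>finite I\<close> le strict lin
proof (induction I)
  case empty
  then show ?case using \<open>F \<noteq> {}\<close> by blast
next
  case (insert i I)
  then obtain z where z: "z \<in> F" "\<forall>k\<in>I. f k z < b k" by blast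
  obtain y where y: "y \<in> F" "f i y < b i" using insert.prems by blast
  define z' where "z' = (1/2) *\<^sub>R z + (1/2) *\<^sub>R y"
  have "z' \<in> F" using convexD[OF \<open>convex F\<close> z(1) y(1)] by (simp add: z'_def)
  moreover have "f k z' < b k" if k: "k \<in> insert i I" for k
  proof -
    have "2 * f k z' = f k z + f k y"
      using insert.prems(3)[OF k] by (simp add: z'_def linear_add linear_scale)
    moreover have "f k z \<le> b k" "f k y \<le> b k" using insert.prems(1) k z(1) y(1) by auto
    moreover have "f k z < b k \<or> f k y < b k" using k z(2) y(2) by auto
    ultimately show ?thesis by linarith
  qed
  ultimately show ?case by blast
qed

lemma finite_ex_pos_scaled_le:
  fixes s t :: "'i \<Rightarrow> real"
  assumes "finite I" and "\<And>i. i \<in> I \<Longrightarrow> 0 < s i"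
  shows "\<exists>\<epsilon>>0. \<forall>i\<in>I. \<epsilon> * t i \<le> s i"
  using assms
proof (induction I)
  case empty
  show ?case by (intro exI[of _ 1]) simp
next
  case (insert i I)
  then obtain \<epsilon> where \<epsilon>: "\<epsilon> > 0" "\<forall>j\<in>I. \<epsilon> * t j \<le> s j" by blast
  define \<delta> where "\<delta> = min \<epsilon> (s i / (\<bar>t i\<bar> + 1))"
  have "\<delta> > 0" using \<epsilon>(1) insert.prems by (simp add: \<delta>_def)
  moreover have "\<delta> * t i \<le> s i"
  proof -
    have "\<delta> * t i \<le> \<delta> * (\<bar>t i\<bar> + 1)" using \<open>\<delta> > 0\<close> by (intro mult_left_mono) auto
    also have "\<dots> \<le> s i" by (simp add: \<delta>_def min_le_iff_disj pos_le_divide_eq[symmetric] add_pos_nonneg)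
    finally show ?thesis .
  qed
  moreover have "\<delta> * t j \<le> s j" if "j \<in> I" for j
  proof (cases "0 \<le> t j")
    case True
    then have "\<delta> * t j \<le> \<epsilon> * t j" by (simp add: \<delta>_def mult_right_mono)
    then show ?thesis using \<epsilon>(2) that by fastforce
  next
    case False
    then have "\<delta> * t j \<le> 0" using \<open>\<delta> > 0\<close> by (simp add: mult_nonneg_nonpos)
    then show ?thesis using insert.prems that by fastforce
  qed
  ultimately show ?case by auto
qed

lemma polyhedron_point_in_open_segment:
  fixes f :: "nat \<Rightarrow> 'a::real_vector \<Rightarrow> real"
  assumes "subspace C" and lin: "\<And>i. linear (f i)"
    and P: "P = {y \<in> C. \<forall>i<m. f i y \<le> b i}" and zP: "z \<in> P" and qP: "q \<in> P" and "z \<noteq> q"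
    and slack_or_flat: "\<And>i. i < m \<Longrightarrow> f i z < b i \<or> f i q = f i z"
  shows "\<exists>w\<in>P. z \<in> open_segment w q"
proof -
  define I where "I = {i. i < m \<and> f i z < b i}"
  obtain \<epsilon> where \<epsilon>: "\<epsilon> > 0" "\<And>i. i \<in> I \<Longrightarrow> \<epsilon> * (f i z - f i q) \<le> b i - f i z"
    using finite_ex_pos_scaled_le[of I "\<lambda>i. b i - f i z" "\<lambda>i. f i z - f i q"]
    by (force simp: I_def)
  define w where "w = z + \<epsilon> *\<^sub>R (z - q)"
  have fw: "f i w = f i z + \<epsilon> * (f i z - f i q)" for i
    using lin[of i] by (simp add: w_def linear_add linear_scale linear_diff)
  have "w \<in> C" using zP qP P \<open>subspace C\<close>
    by (simp add: w_def subspace_add subspace_diff subspace_mul)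
  moreover have "f i w \<le> b i" if "i < m" for i
  proof (cases "i \<in> I")
    case True then show ?thesis using \<epsilon>(2)[OF True] fw[of i] by linarith
  next
    case False
    then have "f i q = f i z" using slack_or_flat[OF that] that by (auto simp: I_def)
    then show ?thesis using zP that fw[of i] by (simp add: P)
  qed
  ultimately have wP: "w \<in> P" using P by blast
  define u where "u = \<epsilon> / (1 + \<epsilon>)"
  have "(1 - u) * (1 + \<epsilon>) = 1" "(1 - u) * \<epsilon> = u"
    using \<epsilon>(1) by (simp_all add: u_def field_simps)
  moreover have "(1 - u) *\<^sub>R w + u *\<^sub>R q
      = ((1 - u) * (1 + \<epsilon>)) *\<^sub>R z - ((1 - u) * \<epsilon>) *\<^sub>R q + u *\<^sub>R q"
    by (simp add: w_def algebra_simps)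
  ultimately have zwq: "z = (1 - u) *\<^sub>R w + u *\<^sub>R q" by simp
  moreover have "w \<noteq> q" using \<open>z \<noteq> q\<close> zwq by (auto simp: algebra_simps)
  moreover have "0 < u" "u < 1" using \<epsilon>(1) by (auto simp: u_def)
  ultimately have "z \<in> open_segment w q" by (auto simp: in_segment)
  with wP show ?thesis by blast
qed

lemma face_of_polyhedron_eq_if_no_proper_tight_face:
  fixes f :: "nat \<Rightarrow> 'a::real_vector \<Rightarrow> real"
  assumes "subspace C" and lin: "\<And>i. linear (f i)"
    and P: "P = {y \<in> C. \<forall>i<m. f i y \<le> b i}"
    and F: "F face_of P" "F \<noteq> {}"
    and no_proper: "\<And>i. i < m \<Longrightarrow> F \<subseteq> {y \<in> P. f i y = b i} \<Longrightarrow> {y \<in> P. f i y = b i} = P"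
  shows "F = P"
proof
  show "F \<subseteq> P" using F(1) face_of_imp_subset by blast
  define I where "I = {i. i < m \<and> \<not> F \<subseteq> {y \<in> P. f i y = b i}}"
  have "\<exists>z\<in>F. \<forall>i\<in>I. f i z < b i"
  proof (rule convex_strictly_feasible_point[OF face_of_imp_convex[OF F(1)] F(2)])
    show "f i y \<le> b i" if "i \<in> I" "y \<in> F" for i y
      using that \<open>F \<subseteq> P\<close> by (auto simp: I_def P)
    show "\<exists>y\<in>F. f i y < b i" if "i \<in> I" for i
      using that \<open>F \<subseteq> P\<close> by (force simp: I_def P)
  qed (simp_all add: I_def lin)
  then obtain z where z: "z \<in> F" "\<And>i. i \<in> I \<Longrightarrow> f i z < b i" by blast
  have zP: "z \<in> P" using z(1) \<open>F \<subseteq> P\<close> by blast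
  \<comment> \<open>z lies strictly inside every constraint that is not tight on all of P, so every point
    of P is the end of a segment through z, and the face F absorbs it.\<close>
  show "P \<subseteq> F"
  proof
    fix q assume qP: "q \<in> P"
    show "q \<in> F"
    proof (cases "q = z")
      case False
      have "f i z < b i \<or> f i q = f i z" if "i < m" for i
      proof (cases "i \<in> I")
        case False
        then have "{y \<in> P. f i y = b i} = P" using that no_proper I_def by blast
        then have "f i z = b i" "f i q = b i" using zP qP by blast+
        then show ?thesis by simp
      qed (use z in blast)
      then obtain w where "w \<in> P" "z \<in> open_segment w q"
        using polyhedron_point_in_open_segment[OF \<open>subspace C\<close> lin P zP qP] False by metis
      then show ?thesis using face_ofD[OF F(1) _ _ qP z(1)] by blast
    qed (use z in blast)
  qed
qed

lemma convex_polyhedron: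
  fixes f :: "nat \<Rightarrow> 'a::real_vector \<Rightarrow> real"
  assumes "subspace C" and "\<And>i. linear (f i)"
  shows "convex {y \<in> C. \<forall>i<m. f i y \<le> b i}"
proof -
  have "{y \<in> C. \<forall>i<m. f i y \<le> b i} = C \<inter> (\<Inter>i<m. f i -` {..b i})" by auto
  then show ?thesis
    using assms by (simp add: convex_Int convex_INT convex_linear_vimage subspace_imp_convex)
qed

lemma subspace_Rsp: "subspace (Rsp l)"
  by (auto simp: subspace_def Rsp_def scaleR_fun_def)

lemma linear_sum_coeffs: "linear (\<lambda>y :: nat \<Rightarrow> real. \<Sum>j<l. a j * y j)"
  by (intro linearI) (simp_all add: scaleR_fun_def sum.distrib sum_distrib_left algebra_simps)

lemma num_facets_le:
  fixes A :: "nat \<Rightarrow> nat \<Rightarrow> real"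
  shows "num_facets {y \<in> Rsp l. \<forall>i<m. (\<Sum>j<l. A i j * y j) \<le> b i} \<le> m"
proof -
  define f where "f i y = (\<Sum>j<l. A i j * y j)" for i and y :: "nat \<Rightarrow> real"
  define Q where "Q = {y \<in> Rsp l. \<forall>i<m. f i y \<le> b i}"
  define G where "G i = {y \<in> Q. f i y = b i}" for i
  have lin: "linear (f i)" for i unfolding f_def by (rule linear_sum_coeffs)
  have G_face: "G i face_of Q" if "i < m" for i
    unfolding G_def using face_of_tight_linear_le[OF convex_polyhedron[OF subspace_Rsp lin] lin] that
    by (simp add: Q_def)
  have "\<exists>i<m. F = G i" if "is_facet F Q" for F
  proof (rule ccontr)
    assume "\<not> (\<exists>i<m. F = G i)"
    with that have "G i = Q" if "i < m" "F \<subseteq> G i" for i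
      using G_face that unfolding is_facet_def by blast
    then have "F = Q"
      using face_of_polyhedron_eq_if_no_proper_tight_face[OF subspace_Rsp lin Q_def]
        \<open>is_facet F Q\<close> by (auto simp: is_facet_def G_def)
    then show False using \<open>is_facet F Q\<close> by (simp add: is_facet_def)
  qed
  then have "{F. is_facet F Q} \<subseteq> G ` {..<m}" by blast
  then have "num_facets Q \<le> card (G ` {..<m})"
    unfolding num_facets_def by (intro card_mono) auto
  also have "\<dots> \<le> m" using card_image_le[of "{..<m}" G] by simp
  finally show ?thesis by (simp add: Q_def f_def)
qed

section \<open>Integrality of bipartite fractional matchings\<close>

lemma convex_mem_between:
  fixes x d :: "'a::real_vector"
  assumes "convex S" and "0 < s" and "0 < t" and "x + s *\<^sub>R d \<in> S" and "x - t *\<^sub>R d \<in> S"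
  shows "x \<in> S"
proof -
  define u w where "u = t / (s + t)" and "w = s / (s + t)"
  have uw: "0 \<le> u" "0 \<le> w" "u + w = 1"
    using assms(2,3) by (simp_all add: u_def w_def add_divide_distrib[symmetric])
  have "u *\<^sub>R (x + s *\<^sub>R d) + w *\<^sub>R (x - t *\<^sub>R d) = (u + w) *\<^sub>R x + (u * s - w * t) *\<^sub>R d"
    by (simp add: algebra_simps)
  also have "u * s - w * t = 0" using assms(2,3) by (simp add: u_def w_def)
  finally have "u *\<^sub>R (x + s *\<^sub>R d) + w *\<^sub>R (x - t *\<^sub>R d) = (u + w) *\<^sub>R x" by simp
  then show ?thesis using convexD[OF assms(1,4,5) uw] uw(3) by simp
qed

lemma homogeneous_system_nontrivial_solution:
  fixes a :: "'w \<Rightarrow> 'e \<Rightarrow> real"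
  assumes "finite W" and "finite F" and "card W < card F"
  shows "\<exists>d. (\<forall>e. e \<notin> F \<longrightarrow> d e = 0) \<and> (\<exists>e\<in>F. d e \<noteq> 0) \<and>
             (\<forall>w\<in>W. (\<Sum>e\<in>F. a w e * d e) = 0)"
  using assms
proof (induction W arbitrary: F a)
  case empty
  then obtain e0 where "e0 \<in> F" by fastforce
  then show ?case by (intro exI[of _ "indicator {e0}"]) (auto simp: indicator_def)
next
  case (insert w W)
  show ?case
  proof (cases "\<forall>e\<in>F. a w e = 0")
    case True
    then show ?thesis using insert.IH[of F a] insert.prems insert.hyps by auto
  next
    case False
    \<comment> \<open>Gaussian elimination: solve the equation of w for the variable e0.\<close>
    then obtain e0 where e0: "e0 \<in> F" "a w e0 \<noteq> 0" by blast
    define a' where "a' w' e = a w' e - a w' e0 * a w e / a w e0" for w' e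
    have "card W < card (F - {e0})" using insert.prems insert.hyps e0(1) by simp
    then obtain d0 where d0: "\<forall>e. e \<notin> F - {e0} \<longrightarrow> d0 e = 0" "\<exists>e\<in>F - {e0}. d0 e \<noteq> 0"
      "\<forall>w'\<in>W. (\<Sum>e\<in>F - {e0}. a' w' e * d0 e) = 0"
      using insert.IH[of "F - {e0}" a'] insert.prems(1) by blast
    define d where "d = d0(e0 := - (\<Sum>e\<in>F - {e0}. a w e * d0 e) / a w e0)"
    have split: "(\<Sum>e\<in>F. a w' e * d e) = a w' e0 * d e0 + (\<Sum>e\<in>F - {e0}. a w' e * d0 e)" for w'
      using e0(1) insert.prems(1) by (simp add: sum.remove d_def)
    have "(\<Sum>e\<in>F. a w e * d e) = 0"
      unfolding split using e0(2) by (simp add: d_def)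
    moreover have "(\<Sum>e\<in>F. a w' e * d e) = 0" if "w' \<in> W" for w'
    proof -
      have "(\<Sum>e\<in>F - {e0}. a' w' e * d0 e)
          = (\<Sum>e\<in>F - {e0}. a w' e * d0 e) - a w' e0 / a w e0 * (\<Sum>e\<in>F - {e0}. a w e * d0 e)"
        by (simp add: a'_def algebra_simps sum_subtractf sum_distrib_left)
      then show ?thesis unfolding split using d0(3) that e0(2) by (simp add: d_def)
    qed
    moreover have "\<forall>e. e \<notin> F \<longrightarrow> d e = 0" "\<exists>e\<in>F. d e \<noteq> 0"
      using d0(1,2) e0(1) by (auto simp: d_def)
    ultimately show ?thesis by auto
  qed
qed

lemma Ints_unit_interval:
  fixes z :: real
  assumes "z \<in> \<int>" and "0 \<le> z" and "z \<le> 1"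
  shows "z = 0 \<or> z = 1"
proof -
  obtain n where "z = of_int n" using assms(1) Ints_cases by blast
  with assms have "0 \<le> n" "n \<le> 1" by simp_all
  then have "n = 0 \<or> n = 1" by linarith
  with \<open>z = of_int n\<close> show ?thesis by auto
qed

lemma finite_delta: "finite E \<Longrightarrow> finite (delta E v)"
  by (simp add: delta_def)

lemma delta_subset: "delta F v \<subseteq> F"
  by (auto simp: delta_def)

lemma sum_delta_support:
  assumes "finite E" and "F \<subseteq> E" and "\<forall>e. e \<notin> F \<longrightarrow> d e = 0"
  shows "sum d (delta E v) = sum d (delta F v)"
  using assms by (intro sum.mono_neutral_right) (auto simp: delta_def finite_delta)

lemma sum_indicator_delta:
  assumes "finite E" and "M \<subseteq> E"
  shows "sum (indicator M) (delta E v) = real (card (delta M v))"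
proof -
  have "sum (indicator M) (delta E v) = (\<Sum>e\<in>delta E v \<inter> M. 1 :: real)"
    by (subst sum.inter_restrict[OF finite_delta[OF assms(1)]]) (simp add: indicator_def of_bool_def)
  also have "delta E v \<inter> M = delta M v" using assms(2) by (auto simp: delta_def)
  finally show ?thesis by simp
qed

lemma sum_add_scaleR_fun: "sum (x + t *\<^sub>R d) D = sum x D + t * sum d D"
  by (simp add: sum.distrib sum_distrib_left scaleR_fun_def)

locale bipartite_graph =
  fixes A B :: "'a set" and E :: "('a \<times> 'a) set"
  assumes finite_A: "finite A" and finite_B: "finite B"
    and disjoint: "A \<inter> B = {}" and edges: "E \<subseteq> A \<times> B"
begin

lemma finite_E: "finite E"
  using finite_A finite_B edges by (meson finite_SigmaI finite_subset)

lemma delta_nonempty_vertex: "F \<subseteq> E \<Longrightarrow> delta F v \<noteq> {} \<Longrightarrow> v \<in> A \<union> B"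
  using edges by (force simp: delta_def)

lemma sum_delta_left:
  assumes F: "F \<subseteq> E"
  shows "(\<Sum>v\<in>A. sum d (delta F v)) = sum d F"
proof -
  have "delta F v = {e \<in> F. fst e = v}" if "v \<in> A" for v
    using that F edges disjoint by (force simp: delta_def)
  then have "(\<Sum>v\<in>A. sum d (delta F v)) = (\<Sum>v\<in>A. sum d {e \<in> F. fst e = v})" by simp
  also have "\<dots> = sum d F"
    using F finite_E finite_A edges by (intro sum.group) (auto intro: finite_subset)
  finally show ?thesis .
qed

lemma sum_delta_right:
  assumes F: "F \<subseteq> E"
  shows "(\<Sum>v\<in>B. sum d (delta F v)) = sum d F"
proof -
  have "delta F v = {e \<in> F. snd e = v}" if "v \<in> B" for v
    using that F edges disjoint by (force simp: delta_def)
  then have "(\<Sum>v\<in>B. sum d (delta F v)) = (\<Sum>v\<in>B. sum d {e \<in> F. snd e = v})" by simp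
  also have "\<dots> = sum d F"
    using F finite_E finite_B edges by (intro sum.group) (auto intro: finite_subset)
  finally show ?thesis .
qed

lemma sum_card_delta: "F \<subseteq> E \<Longrightarrow> (\<Sum>v\<in>A \<union> B. card (delta F v)) = 2 * card F"
  using sum_delta_left[of F "\<lambda>_. 1 :: nat"] sum_delta_right[of F "\<lambda>_. 1 :: nat"]
  by (simp add: sum.union_disjoint finite_A finite_B disjoint)

definition fractional_matching :: "(('a \<times> 'a) \<Rightarrow> real) \<Rightarrow> bool" where
  "fractional_matching x \<longleftrightarrow>
     (\<forall>e. e \<notin> E \<longrightarrow> x e = 0) \<and> (\<forall>e\<in>E. 0 \<le> x e) \<and> (\<forall>v. sum x (delta E v) \<le> 1)"

definition fractional_edges :: "(('a \<times> 'a) \<Rightarrow> real) \<Rightarrow> ('a \<times> 'a) set" where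
  "fractional_edges x = {e \<in> E. 0 < x e \<and> x e < 1}"

definition slack_vertices :: "(('a \<times> 'a) \<Rightarrow> real) \<Rightarrow> 'a set" where
  "slack_vertices x = {v \<in> A \<union> B. sum x (delta E v) < 1}"

definition looseness :: "(('a \<times> 'a) \<Rightarrow> real) \<Rightarrow> nat" where
  "looseness x = card (fractional_edges x) + card (slack_vertices x)"

lemma fractional_edges_subset: "fractional_edges x \<subseteq> E"
  by (auto simp: fractional_edges_def)

lemma fractional_matching_le_1:
  assumes x: "fractional_matching x" and e: "e \<in> E"
  shows "x e \<le> 1"
proof -
  have "x e \<le> sum x (delta E (fst e))"
    using x e by (intro member_le_sum) (auto simp: fractional_matching_def delta_def finite_delta finite_E)
  also have "\<dots> \<le> 1" using x by (simp add: fractional_matching_def)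
  finally show ?thesis .
qed

lemma integral_fractional_matching_is_matching:
  assumes x: "fractional_matching x" and "fractional_edges x = {}"
  shows "x = indicator {e \<in> E. x e = 1}" and "is_matching E {e \<in> E. x e = 1}"
proof -
  define M where "M = {e \<in> E. x e = 1}"
  have "x e = 0 \<or> x e = 1" if "e \<in> E" for e
  proof -
    have "e \<notin> fractional_edges x" and "0 \<le> x e"
      using assms that by (auto simp: fractional_matching_def)
    then show ?thesis using fractional_matching_le_1[OF x that] that
      by (auto simp: fractional_edges_def)
  qed
  moreover have "x e = 0" if "e \<notin> E" for e
    using x that unfolding fractional_matching_def by blast
  ultimately show x_M: "x = indicator {e \<in> E. x e = 1}"
    by (auto simp: indicator_def fun_eq_iff)
  have "real (card (delta M v)) \<le> 1" for v
  proof -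
    have "real (card (delta M v)) = sum x (delta E v)"
      using sum_indicator_delta[OF finite_E, of M v] x_M by (simp add: M_def)
    also have "\<dots> \<le> 1" using x by (simp add: fractional_matching_def)
    finally show ?thesis .
  qed
  then show "is_matching E {e \<in> E. x e = 1}"
    by (simp add: is_matching_def M_def)
qed

lemma tight_vertex_fractional_degree:
  assumes x: "fractional_matching x" and tight: "sum x (delta E v) = 1"
    and ne: "delta (fractional_edges x) v \<noteq> {}"
  shows "2 \<le> card (delta (fractional_edges x) v)"
proof (rule ccontr)
  let ?F = "fractional_edges x"
  assume "\<not> 2 \<le> card (delta ?F v)"
  moreover have "finite (delta ?F v)"
    using finite_E fractional_edges_subset by (meson delta_subset finite_subset)
  moreover have "0 < card (delta ?F v)" using \<open>finite (delta ?F v)\<close> ne by (simp add: card_gt_0_iff)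
  ultimately have "card (delta ?F v) = 1" by linarith
  then obtain e0 where e0: "delta ?F v = {e0}" by (rule card_1_singletonE)
  then have e0v: "e0 \<in> delta E v" and e0_frac: "0 < x e0" "x e0 < 1"
    by (auto simp: delta_def fractional_edges_def)
  \<comment> \<open>All other edges at v are integral, so x e0 = 1 minus an integer.\<close>
  have "x e \<in> \<int>" if "e \<in> delta E v - {e0}" for e
  proof -
    have "e \<in> E" "e \<notin> ?F" using that e0 by (auto simp: delta_def)
    then have "0 \<le> x e" "x e \<le> 1" "\<not> (0 < x e \<and> x e < 1)"
      using x fractional_matching_le_1[OF x] by (auto simp: fractional_matching_def fractional_edges_def)
    then have "x e = 0 \<or> x e = 1" by linarith
    then show ?thesis by auto
  qed
  then have "sum x (delta E v - {e0}) \<in> \<int>" by (rule Ints_sum)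
  moreover have "x e0 = 1 - sum x (delta E v - {e0})"
    using tight e0v finite_delta[OF finite_E] by (simp add: sum.remove)
  ultimately have "x e0 \<in> \<int>" by simp
  then show False using Ints_unit_interval[of "x e0"] e0_frac by auto
qed

lemma sum_delta_eq_0_if_others_eq_0:
  assumes "F \<subseteq> E" and "w \<in> B" and zero: "\<And>v. v \<noteq> w \<Longrightarrow> sum d (delta F v) = 0"
  shows "sum d (delta F w) = 0"
proof -
  have "(\<Sum>v\<in>A. sum d (delta F v)) = 0"
    using \<open>w \<in> B\<close> disjoint by (intro sum.neutral) (metis disjoint_iff zero)
  moreover have "(\<Sum>v\<in>B. sum d (delta F v)) = sum d (delta F w)"
    using zero \<open>w \<in> B\<close> finite_B by (simp add: sum.remove sum.neutral)
  ultimately show ?thesis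
    using sum_delta_left[OF \<open>F \<subseteq> E\<close>, of d] sum_delta_right[OF \<open>F \<subseteq> E\<close>, of d] by simp
qed

lemma card_tight_vertices_le:
  fixes x :: "('a \<times> 'a) \<Rightarrow> real"
  defines "F \<equiv> fractional_edges x"
  defines "W \<equiv> {v. sum x (delta E v) = 1 \<and> delta F v \<noteq> {}}"
  assumes x: "fractional_matching x"
  shows "finite W" and "card W \<le> card F"
    and "delta F u \<noteq> {} \<Longrightarrow> u \<notin> W \<Longrightarrow> card W < card F"
proof -
  have FE: "F \<subseteq> E" unfolding F_def by (rule fractional_edges_subset)
  have W_sub: "W \<subseteq> A \<union> B" using delta_nonempty_vertex[OF FE] by (auto simp: W_def)
  have fin_AB: "finite (A \<union> B)" using finite_A finite_B by simp
  show "finite W" using W_sub fin_AB finite_subset by blast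
  \<comment> \<open>Double counting: tight vertices have fractional degree at least 2.\<close>
  have "(\<Sum>v\<in>W. 2) \<le> (\<Sum>v\<in>W. card (delta F v))"
    using tight_vertex_fractional_degree[OF x] by (intro sum_mono) (auto simp: W_def F_def)
  then have deg: "2 * card W \<le> (\<Sum>v\<in>W. card (delta F v))" by simp
  have total: "(\<Sum>v\<in>A \<union> B. card (delta F v)) = 2 * card F"
    using sum_card_delta[OF FE] .
  have "(\<Sum>v\<in>W. card (delta F v)) \<le> (\<Sum>v\<in>A \<union> B. card (delta F v))"
    using W_sub fin_AB by (intro sum_mono2) auto
  then show "card W \<le> card F" using deg total by linarith
  assume u: "delta F u \<noteq> {}" "u \<notin> W"
  have "(\<Sum>v\<in>W. card (delta F v)) \<le> (\<Sum>v\<in>A \<union> B - {u}. card (delta F v))"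
    using W_sub u(2) fin_AB by (intro sum_mono2) auto
  moreover have "(\<Sum>v\<in>A \<union> B. card (delta F v)) = card (delta F u) + (\<Sum>v\<in>A \<union> B - {u}. card (delta F v))"
    using fin_AB delta_nonempty_vertex[OF FE u(1)] by (simp add: sum.remove)
  moreover have "0 < card (delta F u)"
    using u(1) FE finite_E by (meson card_gt_0_iff delta_subset finite_subset)
  ultimately show "card W < card F" using deg total by linarith
qed

lemma tight_rows_reducible:
  fixes x :: "('a \<times> 'a) \<Rightarrow> real"
  defines "F \<equiv> fractional_edges x"
  defines "W \<equiv> {v. sum x (delta E v) = 1 \<and> delta F v \<noteq> {}}"
  assumes x: "fractional_matching x" and ne: "F \<noteq> {}"
  shows "\<exists>W'. finite W' \<and> W' \<subseteq> W \<and> card W' < card F \<and>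
    (\<forall>d :: ('a \<times> 'a) \<Rightarrow> real. (\<forall>v\<in>W'. sum d (delta F v) = 0) \<longrightarrow> (\<forall>v\<in>W. sum d (delta F v) = 0))"
proof (cases "\<exists>u. delta F u \<noteq> {} \<and> u \<notin> W")
  case True
  then show ?thesis using card_tight_vertices_le[OF x] unfolding F_def W_def by blast
next
  case False
  \<comment> \<open>Every endpoint of a fractional edge is tight, so the rows of the vertices in A and
    those in B have the same sum and the row of one vertex of B is redundant.\<close>
  then have W_eq: "delta F v \<noteq> {} \<Longrightarrow> v \<in> W" for v by blast
  have FE: "F \<subseteq> E" unfolding F_def by (rule fractional_edges_subset)
  obtain e0 where e0: "e0 \<in> F" using ne by blast
  define w0 where "w0 = snd e0"
  have "e0 \<in> delta F w0" using e0 by (simp add: w0_def delta_def)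
  then have "w0 \<in> W" using W_eq by blast
  have "w0 \<in> B" using e0 FE edges by (auto simp: w0_def mem_Times_iff)
  have fin_W: "finite W" and "card W \<le> card F"
    using card_tight_vertices_le[OF x] unfolding F_def W_def by blast+
  moreover have "0 < card W" using \<open>w0 \<in> W\<close> fin_W by (auto simp: card_gt_0_iff)
  ultimately have "card (W - {w0}) < card F" using \<open>w0 \<in> W\<close> by simp
  moreover have "\<forall>v\<in>W. sum d (delta F v) = 0"
    if d: "\<forall>v\<in>W - {w0}. sum d (delta F v) = 0" for d :: "('a \<times> 'a) \<Rightarrow> real"
  proof -
    have zero: "sum d (delta F v) = 0" if "v \<noteq> w0" for v
      using d that W_eq by (cases "delta F v = {}") auto
    then have "sum d (delta F w0) = 0"
      using sum_delta_eq_0_if_others_eq_0[OF FE \<open>w0 \<in> B\<close>] by blast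
    then show ?thesis using zero by metis
  qed
  ultimately show ?thesis using fin_W by blast
qed

lemma ex_tight_preserving_direction:
  assumes x: "fractional_matching x" and ne: "fractional_edges x \<noteq> {}"
  obtains d :: "('a \<times> 'a) \<Rightarrow> real" and e0 where "\<forall>e. e \<notin> fractional_edges x \<longrightarrow> d e = 0" and "d e0 \<noteq> 0"
    and "\<forall>v. sum x (delta E v) = 1 \<longrightarrow> sum d (delta E v) = 0"
proof -
  define F where "F = fractional_edges x"
  define W where "W = {v. sum x (delta E v) = 1 \<and> delta F v \<noteq> {}}"
  have FE: "F \<subseteq> E" unfolding F_def by (rule fractional_edges_subset)
  have fin_F: "finite F" using FE finite_E finite_subset by blast
  obtain W' where W': "finite W'" "W' \<subseteq> W" "card W' < card F"
    and extend: "\<And>d :: ('a \<times> 'a) \<Rightarrow> real.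
      \<forall>v\<in>W'. sum d (delta F v) = 0 \<Longrightarrow> \<forall>v\<in>W. sum d (delta F v) = 0"
    using tight_rows_reducible[OF x ne] unfolding F_def W_def by blast
  have row: "(\<Sum>e\<in>F. of_bool (e \<in> delta F v) * d e) = sum d (delta F v)" for v and d :: "_ \<Rightarrow> real"
  proof -
    have "(\<Sum>e\<in>F. of_bool (e \<in> delta F v) * d e) = sum d (F \<inter> delta F v)"
      by (auto simp: sum.inter_restrict[OF fin_F] intro!: sum.cong)
    also have "F \<inter> delta F v = delta F v" using delta_subset[of F v] by blast
    finally show ?thesis .
  qed
  obtain d :: "('a \<times> 'a) \<Rightarrow> real" where d: "\<forall>e. e \<notin> F \<longrightarrow> d e = 0" "\<exists>e\<in>F. d e \<noteq> 0"
    "\<forall>v\<in>W'. (\<Sum>e\<in>F. of_bool (e \<in> delta F v) * d e) = 0"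
    using homogeneous_system_nontrivial_solution[OF W'(1) fin_F W'(3), of "\<lambda>v e. of_bool (e \<in> delta F v)"]
    by blast
  have W_rows: "\<forall>v\<in>W. sum d (delta F v) = 0" using extend d(3) row by simp
  have tight_zero: "sum d (delta E v) = 0" if tight: "sum x (delta E v) = 1" for v
  proof (cases "delta F v = {}")
    case False
    then have "v \<in> W" using tight by (simp add: W_def)
    then show ?thesis using W_rows sum_delta_support[OF finite_E FE d(1)] by simp
  qed (simp add: sum_delta_support[OF finite_E FE d(1)])
  obtain e0 where "d e0 \<noteq> 0" using d(2) by blast
  then show ?thesis using that[of d e0] d(1) tight_zero unfolding F_def by blast
qed

lemma fractional_edges_move_subset:
  fixes d :: "('a \<times> 'a) \<Rightarrow> real"
  assumes "\<forall>e. e \<notin> fractional_edges x \<longrightarrow> d e = 0"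
  shows "fractional_edges (x + t *\<^sub>R d) \<subseteq> fractional_edges x"
proof
  fix e assume e: "e \<in> fractional_edges (x + t *\<^sub>R d)"
  show "e \<in> fractional_edges x"
  proof (rule ccontr)
    assume "e \<notin> fractional_edges x"
    with assms have "d e = 0" by blast
    with e \<open>e \<notin> fractional_edges x\<close> show False by (simp add: fractional_edges_def scaleR_fun_def)
  qed
qed

lemma slack_vertices_move_subset:
  fixes d :: "('a \<times> 'a) \<Rightarrow> real"
  assumes "fractional_matching x" and "\<forall>v. sum x (delta E v) = 1 \<longrightarrow> sum d (delta E v) = 0"
  shows "slack_vertices (x + t *\<^sub>R d) \<subseteq> slack_vertices x"
proof
  fix v assume v: "v \<in> slack_vertices (x + t *\<^sub>R d)"
  have "sum x (delta E v) \<noteq> 1"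
    using v assms(2) unfolding slack_vertices_def sum_add_scaleR_fun by auto
  moreover have "sum x (delta E v) \<le> 1" using assms(1) by (simp add: fractional_matching_def)
  ultimately show "v \<in> slack_vertices x" using v by (simp add: slack_vertices_def)
qed

lemma fractional_matching_move:
  fixes d :: "('a \<times> 'a) \<Rightarrow> real"
  assumes x: "fractional_matching x"
    and d_frac: "\<forall>e. e \<notin> fractional_edges x \<longrightarrow> d e = 0"
    and d_tight: "\<forall>v. sum x (delta E v) = 1 \<longrightarrow> sum d (delta E v) = 0"
    and "0 \<le> t"
    and edge_ok: "\<And>e. e \<in> fractional_edges x \<Longrightarrow> d e < 0 \<Longrightarrow> t * - d e \<le> x e"
    and vertex_ok: "\<And>v. v \<in> slack_vertices x \<Longrightarrow> 0 < sum d (delta E v) \<Longrightarrow>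
      t * sum d (delta E v) \<le> 1 - sum x (delta E v)"
  shows "fractional_matching (x + t *\<^sub>R d)"
  unfolding fractional_matching_def
proof (intro conjI allI ballI impI)
  fix e assume "e \<notin> E"
  then have "d e = 0" using d_frac fractional_edges_subset by blast
  moreover have "x e = 0" using x \<open>e \<notin> E\<close> unfolding fractional_matching_def by blast
  ultimately show "(x + t *\<^sub>R d) e = 0" by (simp add: scaleR_fun_def)
next
  fix e assume "e \<in> E"
  show "0 \<le> (x + t *\<^sub>R d) e"
  proof (cases "d e < 0")
    case True
    with d_frac have "e \<in> fractional_edges x" by (metis less_irrefl)
    then have "t * - d e \<le> x e" using edge_ok True by blast
    then show ?thesis by (simp add: scaleR_fun_def)
  next
    case False
    then show ?thesis using x \<open>e \<in> E\<close> \<open>0 \<le> t\<close> by (simp add: fractional_matching_def scaleR_fun_def)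
  qed
next
  fix v
  have x_v: "sum x (delta E v) \<le> 1" using x by (simp add: fractional_matching_def)
  consider "sum x (delta E v) < 1" "0 < sum d (delta E v)" | "sum x (delta E v) = 1"
    | "sum d (delta E v) \<le> 0" using x_v by linarith
  then show "sum (x + t *\<^sub>R d) (delta E v) \<le> 1"
  proof cases
    case 1
    then have "delta E v \<noteq> {}" by auto
    then have "v \<in> A \<union> B" by (rule delta_nonempty_vertex[OF order_refl])
    then have "v \<in> slack_vertices x" using 1 by (simp add: slack_vertices_def)
    then have "t * sum d (delta E v) \<le> 1 - sum x (delta E v)" using vertex_ok 1 by blast
    then show ?thesis unfolding sum_add_scaleR_fun by simp
  next
    case 2
    then show ?thesis using d_tight unfolding sum_add_scaleR_fun by simp
  next
    case 3
    then have "t * sum d (delta E v) \<le> 0" using \<open>0 \<le> t\<close> by (simp add: mult_nonneg_nonpos)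
    then show ?thesis using x_v unfolding sum_add_scaleR_fun by simp
  qed
qed

lemma looseness_move_less:
  fixes d :: "('a \<times> 'a) \<Rightarrow> real"
  assumes x: "fractional_matching x"
    and d_frac: "\<forall>e. e \<notin> fractional_edges x \<longrightarrow> d e = 0"
    and d_tight: "\<forall>v. sum x (delta E v) = 1 \<longrightarrow> sum d (delta E v) = 0"
    and hit: "(\<exists>e\<in>fractional_edges x. x e + t * d e = 0) \<or>
      (\<exists>v\<in>slack_vertices x. sum x (delta E v) + t * sum d (delta E v) = 1)"
  shows "looseness (x + t *\<^sub>R d) < looseness x"
proof -
  let ?y = "x + t *\<^sub>R d"
  have fin_frac: "finite (fractional_edges x)"
    using finite_E fractional_edges_subset finite_subset by blast
  have fin_slack: "finite (slack_vertices x)"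
    using finite_A finite_B by (simp add: slack_vertices_def)
  have frac_sub: "fractional_edges ?y \<subseteq> fractional_edges x"
    by (rule fractional_edges_move_subset[OF d_frac])
  have slack_sub: "slack_vertices ?y \<subseteq> slack_vertices x"
    by (rule slack_vertices_move_subset[OF x d_tight])
  from hit show ?thesis
  proof
    assume "\<exists>e\<in>fractional_edges x. x e + t * d e = 0"
    then obtain e where "e \<in> fractional_edges x" "e \<notin> fractional_edges ?y"
      by (auto simp: fractional_edges_def scaleR_fun_def)
    then have "card (fractional_edges ?y) < card (fractional_edges x)"
      using frac_sub by (intro psubset_card_mono[OF fin_frac]) blast
    moreover have "card (slack_vertices ?y) \<le> card (slack_vertices x)"
      using slack_sub fin_slack by (rule card_mono[rotated])
    ultimately show ?thesis by (simp add: looseness_def)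
  next
    assume "\<exists>v\<in>slack_vertices x. sum x (delta E v) + t * sum d (delta E v) = 1"
    then obtain v where v: "v \<in> slack_vertices x" "sum x (delta E v) + t * sum d (delta E v) = 1"
      by blast
    then have "v \<notin> slack_vertices ?y" unfolding slack_vertices_def sum_add_scaleR_fun by simp
    then have "card (slack_vertices ?y) < card (slack_vertices x)"
      using slack_sub v(1) by (intro psubset_card_mono[OF fin_slack]) blast
    moreover have "card (fractional_edges ?y) \<le> card (fractional_edges x)"
      using frac_sub fin_frac by (rule card_mono[rotated])
    ultimately show ?thesis by (simp add: looseness_def)
  qed
qed

lemma direction_meets_constraint:
  fixes d :: "('a \<times> 'a) \<Rightarrow> real"
  assumes x: "fractional_matching x"
    and d_frac: "\<forall>e. e \<notin> fractional_edges x \<longrightarrow> d e = 0" and "d e0 \<noteq> 0"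
    and d_tight: "\<forall>v. sum x (delta E v) = 1 \<longrightarrow> sum d (delta E v) = 0"
  shows "(\<exists>e\<in>fractional_edges x. d e < 0) \<or> (\<exists>v\<in>slack_vertices x. 0 < sum d (delta E v))"
proof (cases "\<exists>e. d e < 0")
  case True
  then obtain e where "d e < 0" by blast
  moreover have "e \<in> fractional_edges x"
  proof (rule ccontr)
    assume "e \<notin> fractional_edges x"
    with d_frac have "d e = 0" by blast
    with \<open>d e < 0\<close> show False by simp
  qed
  ultimately show ?thesis by blast
next
  case False
  \<comment> \<open>Then d is nonnegative and the tail of e0 is a slack vertex whose load increases.\<close>
  have e0: "e0 \<in> E" using d_frac \<open>d e0 \<noteq> 0\<close> fractional_edges_subset by blast
  define v where "v = fst e0"
  have "e0 \<in> delta E v" using e0 by (simp add: v_def delta_def)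
  then have "d e0 \<le> sum d (delta E v)"
    using False finite_delta[OF finite_E] by (intro member_le_sum) (auto simp: not_less)
  moreover have "0 < d e0" using False \<open>d e0 \<noteq> 0\<close> by (metis not_less_iff_gr_or_eq)
  ultimately have "0 < sum d (delta E v)" by linarith
  moreover have "v \<in> A \<union> B" using e0 edges by (auto simp: v_def)
  moreover have "sum x (delta E v) \<noteq> 1" using d_tight \<open>0 < sum d (delta E v)\<close> by auto
  then have "sum x (delta E v) < 1" using x by (simp add: fractional_matching_def order_le_neq_trans)
  ultimately show ?thesis by (auto simp: slack_vertices_def)
qed

lemma descent_step:
  fixes d :: "('a \<times> 'a) \<Rightarrow> real"
  assumes x: "fractional_matching x"
    and d_frac: "\<forall>e. e \<notin> fractional_edges x \<longrightarrow> d e = 0" and "d e0 \<noteq> 0"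
    and d_tight: "\<forall>v. sum x (delta E v) = 1 \<longrightarrow> sum d (delta E v) = 0"
  obtains t where "t > 0" and "fractional_matching (x + t *\<^sub>R d)"
    and "looseness (x + t *\<^sub>R d) < looseness x"
proof -
  \<comment> \<open>Step until a fractional edge drops to 0 or a slack vertex becomes tight.\<close>
  define C where "C = (\<lambda>e. x e / - d e) ` {e \<in> fractional_edges x. d e < 0}
    \<union> (\<lambda>v. (1 - sum x (delta E v)) / sum d (delta E v)) ` {v \<in> slack_vertices x. 0 < sum d (delta E v)}"
  define t where "t = Min C"
  have "finite C"
    using finite_subset[OF fractional_edges_subset finite_E] finite_A finite_B
    by (simp add: C_def slack_vertices_def)
  moreover have "C \<noteq> {}"
    using direction_meets_constraint[OF assms] by (auto simp: C_def)
  ultimately have "t \<in> C" and t_le: "\<And>c. c \<in> C \<Longrightarrow> t \<le> c" by (simp_all add: t_def)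
  then have "t > 0"
    by (auto simp: C_def fractional_edges_def slack_vertices_def divide_pos_neg)
  have "fractional_matching (x + t *\<^sub>R d)"
  proof (rule fractional_matching_move[OF x d_frac d_tight less_imp_le[OF \<open>t > 0\<close>]])
    fix e assume "e \<in> fractional_edges x" "d e < 0"
    then have "t \<le> x e / - d e" by (intro t_le) (auto simp: C_def)
    moreover have "0 < - d e" using \<open>d e < 0\<close> by simp
    ultimately show "t * - d e \<le> x e" using pos_le_divide_eq by blast
  next
    fix v assume "v \<in> slack_vertices x" "0 < sum d (delta E v)"
    then have "t \<le> (1 - sum x (delta E v)) / sum d (delta E v)" by (intro t_le) (auto simp: C_def)
    then show "t * sum d (delta E v) \<le> 1 - sum x (delta E v)"
      using \<open>0 < sum d (delta E v)\<close> by (simp add: pos_le_divide_eq)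
  qed
  moreover have "(\<exists>e\<in>fractional_edges x. x e + t * d e = 0) \<or>
      (\<exists>v\<in>slack_vertices x. sum x (delta E v) + t * sum d (delta E v) = 1)"
  proof -
    from \<open>t \<in> C\<close> consider
        (edge) e where "e \<in> fractional_edges x" "d e < 0" "t = x e / - d e"
      | (vertex) v where "v \<in> slack_vertices x" "0 < sum d (delta E v)"
          "t = (1 - sum x (delta E v)) / sum d (delta E v)"
      unfolding C_def by blast
    then show ?thesis
    proof cases
      case edge
      then have "x e + t * d e = 0" by simp
      then show ?thesis using edge(1) by blast
    next
      case vertex
      then have "sum x (delta E v) + t * sum d (delta E v) = 1" by simp
      then show ?thesis using vertex(1) by blast
    qed
  qed
  then have "looseness (x + t *\<^sub>R d) < looseness x" by (rule looseness_move_less[OF x d_frac d_tight])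
  ultimately show ?thesis using that \<open>t > 0\<close> by blast
qed

theorem fractional_matching_in_matching_polytope:
  "fractional_matching x \<Longrightarrow> x \<in> matching_polytope E"
proof (induction "looseness x" arbitrary: x rule: less_induct)
  case less
  show ?case
  proof (cases "fractional_edges x = {}")
    case True
    then have "x \<in> {indicator M | M. is_matching E M}"
      using integral_fractional_matching_is_matching[OF less.prems] by blast
    then show ?thesis unfolding matching_polytope_def by (rule hull_inc)
  next
    case False
    \<comment> \<open>Moving from x both ways along a tight direction writes x as a convex combination
      of two less loose fractional matchings.\<close>
    obtain d :: "('a \<times> 'a) \<Rightarrow> real" and e0 where d: "\<forall>e. e \<notin> fractional_edges x \<longrightarrow> d e = 0" "d e0 \<noteq> 0"
      "\<forall>v. sum x (delta E v) = 1 \<longrightarrow> sum d (delta E v) = 0"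
      by (rule ex_tight_preserving_direction[OF less.prems False])
    obtain t1 where t1: "t1 > 0" "fractional_matching (x + t1 *\<^sub>R d)"
      "looseness (x + t1 *\<^sub>R d) < looseness x"
      by (rule descent_step[OF less.prems d(1,2,3)])
    have "\<forall>e. e \<notin> fractional_edges x \<longrightarrow> (- d) e = 0" "(- d) e0 \<noteq> 0"
      "\<forall>v. sum x (delta E v) = 1 \<longrightarrow> sum (- d) (delta E v) = 0"
      using d by (simp_all add: sum_negf)
    then obtain t2 where t2: "t2 > 0" "fractional_matching (x + t2 *\<^sub>R - d)"
      "looseness (x + t2 *\<^sub>R - d) < looseness x"
      by (rule descent_step[OF less.prems])
    have "x + t1 *\<^sub>R d \<in> matching_polytope E" "x - t2 *\<^sub>R d \<in> matching_polytope E"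
      using less.hyps[OF t1(3,2)] less.hyps[OF t2(3,2)] by simp_all
    moreover have "convex (matching_polytope E)" by (simp add: matching_polytope_def)
    ultimately show ?thesis using convex_mem_between[OF _ t1(1) t2(1)] by blast
  qed
qed

end

section \<open>The relaxation with integral in-degrees\<close>

lemma oriented_simple_graphD:
  assumes "oriented_simple_graph V E"
  shows "finite V" "E \<subseteq> V \<times> V" "finite E" "\<And>e. e \<in> E \<Longrightarrow> fst e \<noteq> snd e"
  using assms finite_subset[of E "V \<times> V"] unfolding oriented_simple_graph_def by auto

lemma indicator_matching_in_relaxation:
  assumes "finite E" and "is_matching E M"
  shows "indicator M \<in> matching_relaxation_int V E"
proof -
  have ME: "M \<subseteq> E" and deg: "\<And>v. card (delta M v) \<le> 1"
    using assms(2) by (auto simp: is_matching_def)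
  have "sum (indicator M :: _ \<Rightarrow> real) (delta_in E v) \<in> \<int>" for v
    by (rule Ints_sum) (simp add: indicator_def)
  moreover have "sum (indicator M :: _ \<Rightarrow> real) (delta E v) \<le> 1" for v
    using sum_indicator_delta[OF assms(1) ME] deg by simp
  ultimately show ?thesis
    using ME by (auto simp: matching_relaxation_int_def indicator_def)
qed

lemma matching_relaxation_intD:
  assumes "x \<in> matching_relaxation_int V E"
  shows "\<And>e. e \<notin> E \<Longrightarrow> x e = 0" and "\<And>e. e \<in> E \<Longrightarrow> 0 \<le> x e"
    and "\<And>v. v \<in> V \<Longrightarrow> sum x (delta E v) \<le> 1"
    and "\<And>v. v \<in> V \<Longrightarrow> sum x (delta_in E v) \<in> \<int>"
  using assms unfolding matching_relaxation_int_def by blast+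

lemma relaxation_edge_orientation:
  assumes G: "oriented_simple_graph V E" and x: "x \<in> matching_relaxation_int V E"
    and e: "e \<in> E" and pos: "0 < x e"
  shows "sum x (delta_in E (snd e)) = 1" and "sum x (delta_in E (fst e)) < 1"
proof -
  note G' = oriented_simple_graphD[OF G]
  note x_nonneg = matching_relaxation_intD(2)[OF x]
    and x_deg = matching_relaxation_intD(3)[OF x]
    and x_int = matching_relaxation_intD(4)[OF x]
  have in_le: "sum x D \<le> sum x (delta E v)" if "D \<subseteq> delta E v" for D v
    using that x_nonneg G'(3) by (intro sum_mono2) (auto simp: delta_def)
  have ends: "fst e \<in> V" "snd e \<in> V" using e G'(2) by auto
  \<comment> \<open>The in-degree at the head is an integer in (0, 1].\<close>
  have "x e \<le> sum x (delta_in E (snd e))"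
    using e x_nonneg G'(3) by (intro member_le_sum) (auto simp: delta_in_def)
  moreover have "sum x (delta_in E (snd e)) \<le> 1"
    using in_le[of "delta_in E (snd e)"] x_deg[OF ends(2)] by (force simp: delta_in_def delta_def)
  ultimately show head: "sum x (delta_in E (snd e)) = 1"
    using Ints_unit_interval[OF x_int[OF ends(2)]] pos by force
  \<comment> \<open>At the tail, e is incident but not entering, so the in-degree is at most 1 - x e.\<close>
  have "e \<notin> delta_in E (fst e)" using G'(4)[OF e] by (simp add: delta_in_def)
  then have "x e + sum x (delta_in E (fst e)) = sum x (insert e (delta_in E (fst e)))"
    using G'(3) by (simp add: delta_in_def)
  also have "\<dots> \<le> sum x (delta E (fst e))"
    using e by (intro in_le) (auto simp: delta_in_def delta_def)
  also have "\<dots> \<le> 1" using x_deg[OF ends(1)] .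
  finally show "sum x (delta_in E (fst e)) < 1" using pos by linarith
qed

lemma matching_relaxation_int_subset_matching_polytope:
  assumes G: "oriented_simple_graph V E"
  shows "matching_relaxation_int V E \<subseteq> matching_polytope E"
proof
  fix x assume x: "x \<in> matching_relaxation_int V E"
  note G' = oriented_simple_graphD[OF G]
  define K where "K = {v \<in> V. sum x (delta_in E v) = 1}"
  define E' where "E' = {e \<in> E. fst e \<in> V - K \<and> snd e \<in> K}"
  have x_off: "x e = 0" if "e \<notin> E'" for e
  proof (cases "e \<in> E \<and> 0 < x e")
    case True
    with relaxation_edge_orientation[OF G x] have "e \<in> E'"
      using G'(2) by (fastforce simp: E'_def K_def)
    with that show ?thesis by blast
  next
    case False
    with matching_relaxation_intD(1,2)[OF x, of e] show ?thesis by linarith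
  qed
  interpret bipartite_graph "V - K" K E'
    using G' by unfold_locales (auto simp: K_def E'_def)
  have E'E: "E' \<subseteq> E" by (auto simp: E'_def)
  have "sum x (delta E v) = sum x (delta E' v)" for v
    using x_off G'(3) E'E by (intro sum_delta_support) auto
  moreover have "sum x (delta E v) \<le> 1" for v
  proof (cases "v \<in> V")
    case False
    then have "delta E v = {}" using G'(2) by (auto simp: delta_def)
    then show ?thesis by simp
  qed (rule matching_relaxation_intD(3)[OF x])
  ultimately have "fractional_matching x"
    using x_off matching_relaxation_intD(2)[OF x] E'E
    unfolding fractional_matching_def by auto
  then have "x \<in> matching_polytope E'" by (rule fractional_matching_in_matching_polytope)
  also have "\<dots> \<subseteq> matching_polytope E"
    unfolding matching_polytope_def using E'E by (intro hull_mono) (auto simp: is_matching_def)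
  finally show "x \<in> matching_polytope E" .
qed

theorem matching_polytope_eq_hull_relaxation:
  assumes "oriented_simple_graph V E"
  shows "matching_polytope E = convex hull (matching_relaxation_int V E)"
proof
  show "matching_polytope E \<subseteq> convex hull (matching_relaxation_int V E)"
    unfolding matching_polytope_def using oriented_simple_graphD(3)[OF assms]
    by (intro hull_mono) (auto intro: indicator_matching_in_relaxation)
  show "convex hull (matching_relaxation_int V E) \<subseteq> matching_polytope E"
    using matching_relaxation_int_subset_matching_polytope[OF assms]
    by (intro hull_minimal) (simp_all add: matching_polytope_def)
qed

section \<open>The extended formulation\<close>

lemma sum_enumeration_indicator:
  fixes g :: "nat \<Rightarrow> 'e" and y :: "nat \<Rightarrow> real"
  assumes g: "bij_betw g {..<l} E" and "D \<subseteq> E"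
  shows "(\<Sum>j<l. of_bool (g j \<in> D) * y j) = (\<Sum>e\<in>D. y (inv_into {..<l} g e))"
proof -
  let ?J = "{j \<in> {..<l}. g j \<in> D}"
  have bij: "bij_betw g ?J D"
  proof (rule bij_betw_subset[OF g])
    show "g ` ?J = D" using g \<open>D \<subseteq> E\<close> by (force simp: bij_betw_def)
  qed auto
  have "(\<Sum>j<l. of_bool (g j \<in> D) * y j) = (\<Sum>j\<in>?J. y j)"
    by (simp add: sum.inter_filter Int_def)
  also have "\<dots> = (\<Sum>j\<in>?J. y (inv_into {..<l} g (g j)))"
    using g by (intro sum.cong) (auto simp: bij_betw_def)
  also have "\<dots> = (\<Sum>e\<in>D. y (inv_into {..<l} g e))"
    using bij by (rule sum.reindex_bij_betw)
  finally show ?thesis .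
qed

lemma all_less_add_iff:
  fixes l n :: nat
  shows "(\<forall>i<l + n. P i) \<longleftrightarrow> (\<forall>i<l. P i) \<and> (\<forall>r<n. P (l + r))"
proof
  assume H: "(\<forall>i<l. P i) \<and> (\<forall>r<n. P (l + r))"
  show "\<forall>i<l + n. P i"
  proof (intro allI impI)
    fix i assume "i < l + n"
    with H show "P i" by (cases "i < l") (auto dest: spec[of _ "i - l"])
  qed
qed auto

lemma ball_enumeration: "bij_betw g {..<n} A \<Longrightarrow> (\<forall>a\<in>A. P a) \<longleftrightarrow> (\<forall>i<n. P (g i))"
  by (auto simp: bij_betw_def)

locale enumerated_graph =
  fixes V :: "'a set" and E :: "('a \<times> 'a) set" and ge :: "nat \<Rightarrow> 'a \<times> 'a" and gv :: "nat \<Rightarrow> 'a"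
  assumes ge: "bij_betw ge {..<card E} E" and gv: "bij_betw gv {..<card V} V"
begin

text \<open>Variable j encodes the value on the edge ge j; inequality card E + r and integer
  variable r belong to the vertex gv r.\<close>

definition edge_index :: "'a \<times> 'a \<Rightarrow> nat" where
  "edge_index = inv_into {..<card E} ge"

definition incidence :: "('a \<times> 'a) set \<Rightarrow> nat \<Rightarrow> real" where
  "incidence D j = of_bool (ge j \<in> D)"

definition constraint_matrix :: "nat \<Rightarrow> nat \<Rightarrow> real" where
  "constraint_matrix i j =
     (if i < card E then - of_bool (j = i) else incidence (delta E (gv (i - card E))) j)"

definition constraint_rhs :: "nat \<Rightarrow> real" where
  "constraint_rhs i = (if i < card E then 0 else 1)"

definition milef_polyhedron :: "(nat \<Rightarrow> real) set" where
  "milef_polyhedron = {y \<in> Rsp (card E).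
     \<forall>i<card E + card V. (\<Sum>j<card E. constraint_matrix i j * y j) \<le> constraint_rhs i}"

definition in_degrees :: "(nat \<Rightarrow> real) \<Rightarrow> nat \<Rightarrow> real" where
  "in_degrees y = (\<lambda>r. if r < card V then (\<Sum>j<card E. incidence (delta_in E (gv r)) j * y j) else 0)"

definition edge_values :: "(nat \<Rightarrow> real) \<Rightarrow> 'a \<times> 'a \<Rightarrow> real" where
  "edge_values y = (\<lambda>e. if e \<in> E then (\<Sum>j<card E. incidence {e} j * y j) else 0)"

lemma edge_index:
  assumes "e \<in> E"
  shows "edge_index e < card E \<and> ge (edge_index e) = e"
proof -
  have "e \<in> ge ` {..<card E}" using assms bij_betw_imp_surj_on[OF ge] by simp
  then show ?thesis
    using inv_into_into[of e ge "{..<card E}"] by (simp add: edge_index_def f_inv_into_f)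
qed

lemma index_edge: "j < card E \<Longrightarrow> ge j \<in> E \<and> edge_index (ge j) = j"
  using ge by (auto simp: edge_index_def bij_betw_def)

lemma sum_incidence_index: "D \<subseteq> E \<Longrightarrow> (\<Sum>j<card E. incidence D j * y j) = (\<Sum>e\<in>D. y (edge_index e))"
  unfolding incidence_def edge_index_def by (rule sum_enumeration_indicator[OF ge])

lemma edge_values_apply: "edge_values y e = (if e \<in> E then y (edge_index e) else 0)"
  using sum_incidence_index[of "{e}"] by (simp add: edge_values_def)

lemma sum_incidence: "D \<subseteq> E \<Longrightarrow> (\<Sum>j<card E. incidence D j * y j) = sum (edge_values y) D"
  by (simp add: sum_incidence_index edge_values_apply subset_eq)

lemma in_degrees_apply: "r < card V \<Longrightarrow> in_degrees y r = sum (edge_values y) (delta_in E (gv r))"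
  by (simp add: in_degrees_def sum_incidence delta_in_def)

lemma mem_milef_polyhedron_iff:
  "y \<in> milef_polyhedron \<longleftrightarrow> y \<in> Rsp (card E) \<and> (\<forall>e\<in>E. 0 \<le> edge_values y e) \<and>
     (\<forall>v\<in>V. sum (edge_values y) (delta E v) \<le> 1)"
proof -
  have "(\<Sum>j<card E. constraint_matrix i j * y j) = - edge_values y (ge i)" if "i < card E" for i
  proof -
    have "(\<Sum>j<card E. constraint_matrix i j * y j) = (\<Sum>j<card E. if j = i then - y j else 0)"
      using that by (intro sum.cong) (auto simp: constraint_matrix_def)
    then show ?thesis using that index_edge[OF that] by (simp add: edge_values_apply)
  qed
  then have "(\<forall>i<card E. (\<Sum>j<card E. constraint_matrix i j * y j) \<le> constraint_rhs i) \<longleftrightarrow>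
      (\<forall>i<card E. 0 \<le> edge_values y (ge i))"
    by (simp add: constraint_rhs_def)
  also have "\<dots> \<longleftrightarrow> (\<forall>e\<in>E. 0 \<le> edge_values y e)"
    using edge_index index_edge by metis
  finally have edge_rows: "(\<forall>i<card E. (\<Sum>j<card E. constraint_matrix i j * y j) \<le> constraint_rhs i)
      \<longleftrightarrow> (\<forall>e\<in>E. 0 \<le> edge_values y e)" .
  have "(\<forall>r<card V. (\<Sum>j<card E. constraint_matrix (card E + r) j * y j) \<le> constraint_rhs (card E + r))
      \<longleftrightarrow> (\<forall>r<card V. sum (edge_values y) (delta E (gv r)) \<le> 1)"
    by (simp add: constraint_matrix_def constraint_rhs_def sum_incidence delta_subset)
  also have "\<dots> \<longleftrightarrow> (\<forall>v\<in>V. sum (edge_values y) (delta E v) \<le> 1)"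
    by (rule ball_enumeration[OF gv, symmetric])
  finally have vertex_rows: "(\<forall>r<card V. (\<Sum>j<card E. constraint_matrix (card E + r) j * y j)
      \<le> constraint_rhs (card E + r)) \<longleftrightarrow> (\<forall>v\<in>V. sum (edge_values y) (delta E v) \<le> 1)" .
  show ?thesis
    unfolding milef_polyhedron_def mem_Collect_eq all_less_add_iff edge_rows vertex_rows ..
qed

lemma edge_values_image:
  "edge_values ` {y \<in> milef_polyhedron. \<forall>r<card V. in_degrees y r \<in> \<int>} = matching_relaxation_int V E"
proof (intro equalityI subsetI)
  fix x assume "x \<in> edge_values ` {y \<in> milef_polyhedron. \<forall>r<card V. in_degrees y r \<in> \<int>}"
  then obtain y where y: "y \<in> milef_polyhedron" "\<forall>r<card V. in_degrees y r \<in> \<int>"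
    and x: "x = edge_values y" by blast
  have "\<forall>v\<in>V. sum x (delta_in E v) \<in> \<int>"
    using y(2) in_degrees_apply ball_enumeration[OF gv] by (simp add: x)
  moreover have "0 \<le> x e" if "e \<in> E" for e
    using y(1) that by (simp add: mem_milef_polyhedron_iff x)
  moreover have "sum x (delta E v) \<le> 1" if "v \<in> V" for v
    using y(1) that by (simp add: mem_milef_polyhedron_iff x)
  moreover have "x e = 0" if "e \<notin> E" for e
    using that by (simp add: x edge_values_apply)
  ultimately show "x \<in> matching_relaxation_int V E"
    by (simp add: matching_relaxation_int_def)
next
  fix x assume x: "x \<in> matching_relaxation_int V E"
  define y where "y j = (if j < card E then x (ge j) else 0)" for j
  have "edge_values y = x"
    using edge_index matching_relaxation_intD(1)[OF x] by (auto simp: edge_values_apply y_def)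
  moreover have "y \<in> milef_polyhedron"
    using matching_relaxation_intD(2,3)[OF x] \<open>edge_values y = x\<close>
    by (simp add: mem_milef_polyhedron_iff Rsp_def y_def)
  moreover have "\<forall>r<card V. in_degrees y r \<in> \<int>"
  proof -
    have "\<forall>v\<in>V. sum x (delta_in E v) \<in> \<int>" using matching_relaxation_intD(4)[OF x] by blast
    then show ?thesis using in_degrees_apply \<open>edge_values y = x\<close> ball_enumeration[OF gv] by simp
  qed
  ultimately show "x \<in> edge_values ` {y \<in> milef_polyhedron. \<forall>r<card V. in_degrees y r \<in> \<int>}"
    by blast
qed

lemma milef_polyhedron_shape:
  shows "polyhedron_in (card E) milef_polyhedron" and "affine_to_Rk (card E) (card V) in_degrees"
    and "affine_to_RE (card E) E edge_values" and "num_facets milef_polyhedron \<le> card E + card V"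
proof -
  show "polyhedron_in (card E) milef_polyhedron"
    unfolding polyhedron_in_def milef_polyhedron_def
    by (intro exI[of _ "card E + card V"] exI[of _ constraint_matrix] exI[of _ constraint_rhs]) (rule refl)
  show "affine_to_Rk (card E) (card V) in_degrees"
    unfolding affine_to_Rk_def in_degrees_def
    by (intro exI[of _ "\<lambda>r. incidence (delta_in E (gv r))"] exI[of _ "\<lambda>_. 0"]) (simp add: fun_eq_iff)
  show "affine_to_RE (card E) E edge_values"
    unfolding affine_to_RE_def edge_values_def
    by (intro exI[of _ "\<lambda>e. incidence {e}"] exI[of _ "\<lambda>_. 0"]) (simp add: fun_eq_iff)
  show "num_facets milef_polyhedron \<le> card E + card V"
    unfolding milef_polyhedron_def by (rule num_facets_le)
qed

end

lemma relaxation_MILEF: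
  fixes E :: "('a \<times> 'a) set"
  assumes "finite V" and "finite E"
  obtains l Q \<sigma> \<pi> where "polyhedron_in l Q" and "affine_to_Rk l (card V) \<sigma>"
    and "affine_to_RE l E \<pi>" and "\<pi> ` {y \<in> Q. \<forall>i<card V. \<sigma> y i \<in> \<int>} = matching_relaxation_int V E"
    and "num_facets Q \<le> card E + card V"
proof -
  obtain ge where "bij_betw ge {..<card E} E"
    using ex_bij_betw_nat_finite[OF \<open>finite E\<close>] by (auto simp: atLeast0LessThan)
  moreover obtain gv where "bij_betw gv {..<card V} V"
    using ex_bij_betw_nat_finite[OF \<open>finite V\<close>] by (auto simp: atLeast0LessThan)
  ultimately interpret enumerated_graph V E ge gv by unfold_locales
  show ?thesis
    by (rule that[OF milef_polyhedron_shape(1-3) edge_values_image milef_polyhedron_shape(4)])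
qed

lemma matching_polytope_MILEF:
  assumes G: "oriented_simple_graph V E"
  shows "\<exists>l Q \<sigma> \<pi>. is_MILEF E (matching_polytope E) l Q (card V) \<sigma> \<pi> \<and>
           real (num_facets Q) \<le> 2 * real (card V) ^ 2"
proof -
  note G' = oriented_simple_graphD[OF G]
  obtain l Q \<sigma> \<pi> where milef: "polyhedron_in l Q" "affine_to_Rk l (card V) \<sigma>" "affine_to_RE l E \<pi>"
    "\<pi> ` {y \<in> Q. \<forall>i<card V. \<sigma> y i \<in> \<int>} = matching_relaxation_int V E"
    and facets: "num_facets Q \<le> card E + card V"
    by (rule relaxation_MILEF[OF G'(1,3)])
  have "card E \<le> card V ^ 2"
    using card_mono[OF _ G'(2)] G'(1) by (simp add: card_cartesian_product power2_eq_square)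
  moreover have "card V \<le> card V ^ 2" by (simp add: power2_eq_square)
  ultimately have "real (num_facets Q) \<le> 2 * real (card V) ^ 2"
    using facets by (simp flip: of_nat_power)
  moreover have "is_MILEF E (matching_polytope E) l Q (card V) \<sigma> \<pi>"
    using milef matching_polytope_eq_hull_relaxation[OF G] by (simp add: is_MILEF_def)
  ultimately show ?thesis by blast
qed

theorem mainTheorem17:
  shows "(\<forall>(V :: 'a set) E. oriented_simple_graph V E \<longrightarrow>
            matching_polytope E = convex hull (matching_relaxation_int V E))
         \<and> (\<exists>c :: real. \<forall>(V :: nat set) E. oriented_simple_graph V E \<longrightarrow>
            (\<exists>l Q \<sigma> \<pi>. is_MILEF E (matching_polytope E) l Q (card V) \<sigma> \<pi> \<and>
                        real (num_facets Q) \<le> c * real (card V) ^ 2))"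
  using matching_polytope_eq_hull_relaxation matching_polytope_MILEF by blast

end
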